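(* A threshold function $f$ is linear read-once if and only if no restriction of $f$ equals, up to renaming of variables, a function in $\mathcal{G}$, where $\mathcal{G}$ is the set of all functions obtained from $g_n(x_1,\ldots,x_n)=x_1x_2\vee x_1x_3\vee\cdots\vee x_1x_n\vee x_2x_3\cdots x_n$, $n\ge3$, by negating some (possibly none) of the variables.
   Context: $f$ on $\{0,1\}^n$ is a threshold function if there are $w_1,\ldots,w_n,t\in\mathbb{R}$ with $f(\mathbf{x})=0\iff\sum_iw_ix_i\le t$. A restriction of $f$ is obtained by fixing some variables to constants. Linear read-once (lro): constant or representable by a nested formula (literals $x,\overline{x}$ are nested; $x\vee t$, $x\wedge t$, $\overline{x}\vee t$, $\overline{x}\wedge t$ are nested when $t$ is nested and contains neither $x$ nor $\overline{x}$). *)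

theory Defs
  imports Main HOL.Real
begin

text \<open>A Boolean function of n variables is represented as f :: (nat => bool) => bool
  that depends only on the coordinates i < n (True = 1, False = 0).\<close>

definition boolfun :: "nat \<Rightarrow> ((nat \<Rightarrow> bool) \<Rightarrow> bool) \<Rightarrow> bool" where
  "boolfun n f \<longleftrightarrow> (\<forall>x y. (\<forall>i<n. x i = y i) \<longrightarrow> f x = f y)"

definition threshold :: "nat \<Rightarrow> ((nat \<Rightarrow> bool) \<Rightarrow> bool) \<Rightarrow> bool" where
  "threshold n f \<longleftrightarrow> (\<exists>(w::nat \<Rightarrow> real) (t::real).
      \<forall>x. (\<not> f x) \<longleftrightarrow> (\<Sum>i<n. w i * (if x i then 1 else 0)) \<le> t)"

datatype nform = Lit nat bool | Disj nat bool nform | Conj nat bool nform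

fun lit_val :: "nat \<Rightarrow> bool \<Rightarrow> (nat \<Rightarrow> bool) \<Rightarrow> bool" where
  "lit_val i b x = (if b then x i else \<not> x i)"

fun nf_eval :: "nform \<Rightarrow> (nat \<Rightarrow> bool) \<Rightarrow> bool" where
  "nf_eval (Lit i b) x = lit_val i b x"
| "nf_eval (Disj i b t) x = (lit_val i b x \<or> nf_eval t x)"
| "nf_eval (Conj i b t) x = (lit_val i b x \<and> nf_eval t x)"

fun nf_vars :: "nform \<Rightarrow> nat set" where
  "nf_vars (Lit i b) = {i}"
| "nf_vars (Disj i b t) = insert i (nf_vars t)"
| "nf_vars (Conj i b t) = insert i (nf_vars t)"

fun nested :: "nform \<Rightarrow> bool" where
  "nested (Lit i b) = True"
| "nested (Disj i b t) = (nested t \<and> i \<notin> nf_vars t)"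
| "nested (Conj i b t) = (nested t \<and> i \<notin> nf_vars t)"

definition lro :: "nat \<Rightarrow> ((nat \<Rightarrow> bool) \<Rightarrow> bool) \<Rightarrow> bool" where
  "lro n f \<longleftrightarrow> (\<forall>x y. f x = f y) \<or>
     (\<exists>\<phi>. nested \<phi> \<and> nf_vars \<phi> \<subseteq> {..<n} \<and> (\<forall>x. f x = nf_eval \<phi> x))"

text \<open>g_m(y_0,...,y_{m-1}) = y_0 y_1 \<or> ... \<or> y_0 y_{m-1} \<or> y_1 y_2 ... y_{m-1}
  (0-indexed version of g_m(x_1,...,x_m)), and its variant with the variables in N negated.\<close>

definition gfun :: "nat \<Rightarrow> (nat \<Rightarrow> bool) \<Rightarrow> bool" where
  "gfun m y \<longleftrightarrow> (\<exists>j\<in>{1..<m}. y 0 \<and> y j) \<or> (\<forall>j\<in>{1..<m}. y j)"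

definition gneg :: "nat \<Rightarrow> nat set \<Rightarrow> (nat \<Rightarrow> bool) \<Rightarrow> bool" where
  "gneg m N y = gfun m (\<lambda>i. if i \<in> N then \<not> y i else y i)"

definition has_G_restriction :: "nat \<Rightarrow> ((nat \<Rightarrow> bool) \<Rightarrow> bool) \<Rightarrow> bool" where
  "has_G_restriction n f \<longleftrightarrow>
     (\<exists>S c m \<sigma> N. S \<subseteq> {..<n} \<and> 3 \<le> m \<and> N \<subseteq> {..<m} \<and>
        bij_betw \<sigma> ({..<n} - S) {..<m} \<and>
        (\<forall>y. f (\<lambda>i. if i \<in> S then c i else y (\<sigma> i)) = gneg m N y))"

end

theory Submission
  imports Defs
begin

text \<open>A nested formula has a canalizing variable, one whose fixing to a suitable value makes
  the function constant, and so does every restriction of it; no function of \<open>\<G>\<close> has one.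
  Conversely, induct on the number of variables. Either some one-variable restriction of \<open>f\<close> is
  not linear read-once, and a \<open>\<G>\<close>-restriction of it is one of \<open>f\<close>; or all of them are. Then
  none of them is constant (otherwise \<open>f\<close> itself would be nested), so each is canalizing, and
  for a threshold function with nonnegative weights this forces exactly the weight pattern
  of \<open>g\<^sub>m\<close>, the heaviest variable playing the role of \<open>x\<^sub>1\<close>.\<close>

definition threshold_on :: "nat set \<Rightarrow> ((nat \<Rightarrow> bool) \<Rightarrow> bool) \<Rightarrow> bool" where
  "threshold_on F h \<longleftrightarrow> (\<exists>(w::nat \<Rightarrow> real) (t::real).
      \<forall>x. (\<not> h x) \<longleftrightarrow> (\<Sum>i\<in>F. w i * (if x i then 1 else 0)) \<le> t)"

definition lro_on :: "nat set \<Rightarrow> ((nat \<Rightarrow> bool) \<Rightarrow> bool) \<Rightarrow> bool" where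
  "lro_on F h \<longleftrightarrow> (\<forall>x y. h x = h y) \<or>
     (\<exists>\<phi>. nested \<phi> \<and> nf_vars \<phi> \<subseteq> F \<and> (\<forall>x. h x = nf_eval \<phi> x))"

definition has_G_restriction_on :: "nat set \<Rightarrow> ((nat \<Rightarrow> bool) \<Rightarrow> bool) \<Rightarrow> bool" where
  "has_G_restriction_on F h \<longleftrightarrow>
     (\<exists>S c m \<sigma> N. S \<subseteq> F \<and> 3 \<le> m \<and> N \<subseteq> {..<m} \<and>
        bij_betw \<sigma> (F - S) {..<m} \<and>
        (\<forall>y. h (\<lambda>i. if i \<in> S then c i else y (\<sigma> i)) = gneg m N y))"

definition canalizing_in :: "nat set \<Rightarrow> ((nat \<Rightarrow> bool) \<Rightarrow> bool) \<Rightarrow> bool" where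
  "canalizing_in F h \<longleftrightarrow> (\<exists>k\<in>F. \<exists>c. \<forall>y z. h (y(k := c)) = h (z(k := c)))"

lemma canalizing_in_restricted_nf_eval:
  "canalizing_in UNIV (\<lambda>y. nf_eval \<phi> (\<lambda>i. if i \<in> S then c i else y (\<sigma> i)))"
  unfolding canalizing_in_def
proof (induction \<phi>)
  case (Lit i b)
  show ?case by (cases "i \<in> S") (auto intro!: exI[of _ "\<sigma> i"])
next
  case (Disj i b t)
  show ?case
  proof (cases "i \<in> S")
    case True
    have "\<And>y. nf_eval (Disj i b t) (\<lambda>i. if i \<in> S then c i else y (\<sigma> i))
        = (lit_val i b c \<or> nf_eval t (\<lambda>i. if i \<in> S then c i else y (\<sigma> i)))"
      using True by simp
    then show ?thesis using Disj.IH by (cases "lit_val i b c") (simp_all only: simp_thms, blast+)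
  next
    case False
    then show ?thesis by (auto intro!: exI[of _ "\<sigma> i"] exI[of _ b])
  qed
next
  case (Conj i b t)
  show ?case
  proof (cases "i \<in> S")
    case True
    have "\<And>y. nf_eval (Conj i b t) (\<lambda>i. if i \<in> S then c i else y (\<sigma> i))
        = (lit_val i b c \<and> nf_eval t (\<lambda>i. if i \<in> S then c i else y (\<sigma> i)))"
      using True by simp
    then show ?thesis using Conj.IH by (cases "lit_val i b c") (simp_all only: simp_thms, blast+)
  next
    case False
    then show ?thesis by (auto intro!: exI[of _ "\<sigma> i"] exI[of _ "\<not> b"])
  qed
qed

lemma gfun_False_but_one:
  assumes "3 \<le> m" shows "\<not> gfun m ((\<lambda>_. False)(j := b))"
proof -
  define k :: nat where "k = (if j = 1 then 2 else 1)"
  have "k \<in> {1..<m}" "k \<noteq> j" using assms by (auto simp: k_def)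
  moreover have "\<not> (\<exists>i\<in>{1..<m}. ((\<lambda>_. False)(j := b)) 0 \<and> ((\<lambda>_. False)(j := b)) i)" by auto
  ultimately show ?thesis unfolding gfun_def by auto
qed

lemma gfun_True_but_one:
  assumes "3 \<le> m" shows "gfun m ((\<lambda>_. True)(j := b))"
proof (cases "j = 0")
  case False
  define k :: nat where "k = (if j = 1 then 2 else 1)"
  have "k \<in> {1..<m}" "k \<noteq> j" using assms by (auto simp: k_def)
  then show ?thesis using False unfolding gfun_def by auto
qed (auto simp: gfun_def)

text \<open>Fixing one variable of a function of \<open>\<G>\<close> always leaves a point of value \<open>False\<close>
  (all literals false but one) and a point of value \<open>True\<close> (all literals true but one).\<close>

lemma not_canalizing_gneg:
  assumes "3 \<le> m" shows "\<not> canalizing_in UNIV (gneg m N)"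
proof
  assume "canalizing_in UNIV (gneg m N)"
  then obtain j b where const: "\<forall>y z. gneg m N (y(j := b)) = gneg m N (z(j := b))"
    unfolding canalizing_in_def by blast
  define b' where "b' = (if j \<in> N then \<not> b else b)"
  have "gneg m N ((\<lambda>i. i \<in> N)(j := b)) = gfun m ((\<lambda>_. False)(j := b'))"
    unfolding gneg_def b'_def by (rule arg_cong[where f = "gfun m"]) (auto simp: fun_eq_iff)
  moreover have "gneg m N ((\<lambda>i. i \<notin> N)(j := b)) = gfun m ((\<lambda>_. True)(j := b'))"
    unfolding gneg_def b'_def by (rule arg_cong[where f = "gfun m"]) (auto simp: fun_eq_iff)
  ultimately show False
    using const gfun_False_but_one[OF assms] gfun_True_but_one[OF assms] by metis
qed

lemma not_has_G_restriction_on_if_lro_on: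
  assumes "lro_on F f" shows "\<not> has_G_restriction_on F f"
proof
  assume "has_G_restriction_on F f"
  then obtain S c m \<sigma> N where m: "3 \<le> m"
    and restr: "\<forall>y. f (\<lambda>i. if i \<in> S then c i else y (\<sigma> i)) = gneg m N y"
    unfolding has_G_restriction_on_def by blast
  have "canalizing_in UNIV (\<lambda>y. f (\<lambda>i. if i \<in> S then c i else y (\<sigma> i)))"
    using assms unfolding lro_on_def
  proof
    assume "\<forall>x y. f x = f y"
    then show ?thesis unfolding canalizing_in_def by blast
  next
    assume "\<exists>\<phi>. nested \<phi> \<and> nf_vars \<phi> \<subseteq> F \<and> (\<forall>x. f x = nf_eval \<phi> x)"
    then obtain \<phi> where "f = nf_eval \<phi>" by blast
    then show ?thesis using canalizing_in_restricted_nf_eval by simp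
  qed
  then show False using restr not_canalizing_gneg[OF m] by simp
qed

lemma lro_on_if_then_else:
  assumes "x \<in> F" and "lro_on (F - {x}) g"
  shows "lro_on F (\<lambda>y. if y x = b then c else g y)"
  using assms(2) unfolding lro_on_def[of "F - {x}"]
proof
  assume "\<forall>y z. g y = g z"
  then obtain d where g: "\<And>y. g y = d" by blast
  show ?thesis
  proof (cases "c = d")
    case True
    then show ?thesis using g unfolding lro_on_def by auto
  next
    case False
    then have "\<forall>y. (if y x = b then c else g y) = nf_eval (Lit x (if c then b else \<not> b)) y"
      using g by auto
    then show ?thesis using assms(1) unfolding lro_on_def
      by (intro disjI2 exI[of _ "Lit x (if c then b else \<not> b)"]) auto
  qed
next
  assume "\<exists>\<phi>. nested \<phi> \<and> nf_vars \<phi> \<subseteq> F - {x} \<and> (\<forall>y. g y = nf_eval \<phi> y)"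
  then obtain \<phi> where \<phi>: "nested \<phi>" "nf_vars \<phi> \<subseteq> F - {x}" "\<And>y. g y = nf_eval \<phi> y" by blast
  define \<psi> where "\<psi> = (if c then Disj x b \<phi> else Conj x (\<not> b) \<phi>)"
  have "nested \<psi>" "nf_vars \<psi> \<subseteq> F" using \<phi> assms(1) by (auto simp: \<psi>_def)
  moreover have "(if y x = b then c else g y) = nf_eval \<psi> y" for y
    using \<phi>(3) by (cases b) (auto simp: \<psi>_def)
  ultimately show ?thesis unfolding lro_on_def by blast
qed

lemma lro_on_if_canalizing_var:
  assumes "x \<in> F" and const: "\<forall>y z. h (y(x := b)) = h (z(x := b))"
    and "lro_on (F - {x}) (\<lambda>y. h (y(x := \<not> b)))"
  shows "lro_on F h"
proof -
  have "h y = (if y x = b then h ((\<lambda>_. False)(x := b)) else h (y(x := \<not> b)))" for y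
  proof (cases "y x = b")
    case True
    then have "h y = h (y(x := b))" by (simp add: fun_upd_idem)
    also have "\<dots> = h ((\<lambda>_. False)(x := b))" using const by blast
    finally show ?thesis using True by simp
  next
    case False
    then have "y(x := \<not> b) = y" by (intro fun_upd_idem) simp
    then show ?thesis using False by simp
  qed
  then have h_eq: "h = (\<lambda>y. if y x = b then h ((\<lambda>_. False)(x := b)) else h (y(x := \<not> b)))"
    by (rule ext)
  show ?thesis by (subst h_eq) (rule lro_on_if_then_else[OF assms(1,3)])
qed

lemma canalizing_in_nf_vars: "canalizing_in (nf_vars \<phi>) (nf_eval \<phi>)"
proof (cases \<phi>)
  case (Lit i b)
  then show ?thesis unfolding canalizing_in_def by (intro bexI[of _ i] exI[of _ b]) auto
next
  case (Disj i b t)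
  then show ?thesis unfolding canalizing_in_def by (intro bexI[of _ i] exI[of _ b]) auto
next
  case (Conj i b t)
  then show ?thesis unfolding canalizing_in_def by (intro bexI[of _ i] exI[of _ "\<not> b"]) auto
qed

lemma canalizing_in_if_lro_on:
  assumes "lro_on F g" and "\<exists>y z. g y \<noteq> g z"
  shows "canalizing_in F g"
proof -
  obtain \<phi> where "nf_vars \<phi> \<subseteq> F" and "g = nf_eval \<phi>"
    using assms unfolding lro_on_def by blast
  then show ?thesis using canalizing_in_nf_vars[of \<phi>] unfolding canalizing_in_def by blast
qed

lemma threshold_on_empty_const: "threshold_on {} h \<Longrightarrow> h y = h z"
  unfolding threshold_on_def by auto

lemma threshold_on_restrict:
  assumes "finite F" and "x \<in> F" and "threshold_on F h"
  shows "threshold_on (F - {x}) (\<lambda>y. h (y(x := b)))"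
proof -
  obtain w t where wt: "\<And>y. (\<not> h y) \<longleftrightarrow> (\<Sum>i\<in>F. w i * (if y i then 1 else 0)) \<le> (t::real)"
    using assms(3) unfolding threshold_on_def by blast
  have "(\<Sum>i\<in>F. w i * (if (y(x := b)) i then 1 else 0))
      = w x * (if b then 1 else 0) + (\<Sum>i\<in>F - {x}. w i * (if y i then 1 else 0))" for y
    using assms(1,2) by (simp add: sum.remove)
  then have "\<forall>y. (\<not> h (y(x := b)))
      \<longleftrightarrow> (\<Sum>i\<in>F - {x}. w i * (if y i then 1 else 0)) \<le> t - w x * (if b then 1 else 0)"
    using wt by auto
  then show ?thesis unfolding threshold_on_def by blast
qed

lemma has_G_restriction_on_if_restrict:
  assumes "x \<in> F" and "has_G_restriction_on (F - {x}) (\<lambda>y. h (y(x := b)))"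
  shows "has_G_restriction_on F h"
proof -
  obtain S c m \<sigma> N where S: "S \<subseteq> F - {x}" "3 \<le> m" "N \<subseteq> {..<m}"
      "bij_betw \<sigma> (F - {x} - S) {..<m}"
    and restr: "\<forall>y. h ((\<lambda>i. if i \<in> S then c i else y (\<sigma> i))(x := b)) = gneg m N y"
    using assms(2) unfolding has_G_restriction_on_def by blast
  have restr_eq: "(\<lambda>i. if i \<in> insert x S then (c(x := b)) i else y (\<sigma> i))
      = (\<lambda>i. if i \<in> S then c i else y (\<sigma> i))(x := b)" for y
    using S(1) by (auto simp: fun_eq_iff)
  show ?thesis unfolding has_G_restriction_on_def
  proof (intro exI conjI)
    show "insert x S \<subseteq> F" using S(1) assms(1) by auto
    have "F - insert x S = F - {x} - S" by auto
    then show "bij_betw \<sigma> (F - insert x S) {..<m}" using S(4) by simp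
    show "\<forall>y. h (\<lambda>i. if i \<in> insert x S then (c(x := b)) i else y (\<sigma> i)) = gneg m N y"
      unfolding restr_eq by (rule restr)
  qed (fact S(2), fact S(3))
qed

text \<open>Flip the variables of negative weight; \<open>s\<close> records the signs of the weights.\<close>

lemma threshold_on_nonneg_weights:
  assumes "finite F" and "threshold_on F h"
  obtains v :: "nat \<Rightarrow> real" and s t where "\<And>i. 0 \<le> v i"
    and "\<And>y. h y \<longleftrightarrow> t < sum v {i\<in>F. y i = s i}"
proof -
  obtain w t where wt: "\<And>y. (\<not> h y) \<longleftrightarrow> (\<Sum>i\<in>F. w i * (if y i then 1 else 0)) \<le> (t::real)"
    using assms(2) unfolding threshold_on_def by blast
  define s where "s i = (0 \<le> w i)" for i
  define C where "C = (\<Sum>i\<in>F. if w i < 0 then w i else 0)"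
  have sum_eq: "(\<Sum>i\<in>F. w i * (if y i then 1 else 0)) = sum (\<lambda>i. \<bar>w i\<bar>) {i\<in>F. y i = s i} + C" for y
  proof -
    have "(\<Sum>i\<in>F. w i * (if y i then 1 else 0))
        = (\<Sum>i\<in>F. (if y i = s i then \<bar>w i\<bar> else 0) + (if w i < 0 then w i else 0))"
      by (intro sum.cong) (auto simp: s_def)
    also have "\<dots> = sum (\<lambda>i. \<bar>w i\<bar>) {i\<in>F. y i = s i} + C"
      using assms(1) by (simp add: sum.distrib sum.inter_filter C_def)
    finally show ?thesis .
  qed
  have "h y \<longleftrightarrow> t - C < sum (\<lambda>i. \<bar>w i\<bar>) {i\<in>F. y i = s i}" for y
    using wt[of y] sum_eq[of y] by linarith
  then show ?thesis using that[of "\<lambda>i. \<bar>w i\<bar>"] by auto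
qed

locale polarized_threshold =
  fixes F :: "nat set" and v :: "nat \<Rightarrow> real" and s :: "nat \<Rightarrow> bool" and t :: real
    and h :: "(nat \<Rightarrow> bool) \<Rightarrow> bool"
  assumes finite_F: "finite F" and nonneg: "\<And>i. 0 \<le> v i"
    and h_iff: "\<And>y. h y \<longleftrightarrow> t < sum v {i\<in>F. y i = s i}"
begin

lemma sum_mono_subset: "A \<subseteq> B \<Longrightarrow> B \<subseteq> F \<Longrightarrow> sum v A \<le> sum v B"
  using finite_F nonneg by (intro sum_mono2) (auto intro: finite_subset)

lemma sum_remove: "A \<subseteq> F \<Longrightarrow> x \<in> A \<Longrightarrow> sum v (A - {x}) = sum v A - v x"
  using finite_subset[OF _ finite_F] by (simp add: sum_diff1)

definition point :: "nat set \<Rightarrow> nat \<Rightarrow> bool" where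
  "point A i = (if i \<in> A then s i else \<not> s i)"

lemma h_point: "h (point A) \<longleftrightarrow> t < sum v (F \<inter> A)"
proof -
  have "{i\<in>F. point A i = s i} = F \<inter> A" by (auto simp: point_def)
  then show ?thesis by (simp add: h_iff)
qed

lemma point_upd_agree: "(point A)(k := s k) = point (insert k A)"
  by (auto simp: point_def fun_eq_iff)

lemma point_upd_disagree: "(point A)(k := \<not> s k) = point (A - {k})"
  by (auto simp: point_def fun_eq_iff)

lemma heavy_var_forces_true:
  assumes "x \<in> F" and "t < v x" shows "h (y(x := s x))"
proof -
  have "sum v {x} \<le> sum v {i\<in>F. (y(x := s x)) i = s i}"
    using assms(1) by (intro sum_mono_subset) auto
  then show ?thesis using assms(2) by (simp add: h_iff)
qed

lemma light_complement_forces_false: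
  assumes "x \<in> F" and "sum v F - v x \<le> t" shows "\<not> h (y(x := \<not> s x))"
proof -
  have "sum v {i\<in>F. (y(x := \<not> s x)) i = s i} \<le> sum v (F - {x})"
    by (intro sum_mono_subset) auto
  then show ?thesis using assms by (simp add: h_iff sum_remove)
qed

end

text \<open>The critical case of the induction: \<open>h\<close> is not linear read-once, but all its
  one-variable restrictions are.\<close>

locale critical_threshold = polarized_threshold +
  assumes restriction_nonconst: "\<And>x b. x \<in> F \<Longrightarrow> \<exists>y z. h (y(x := b)) \<noteq> h (z(x := b))"
    and restriction_canalizing: "\<And>x b. x \<in> F \<Longrightarrow> canalizing_in (F - {x}) (\<lambda>y. h (y(x := b)))"
begin

lemma weight_le_threshold: "x \<in> F \<Longrightarrow> v x \<le> t"
  using heavy_var_forces_true restriction_nonconst by (meson not_le)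

lemma threshold_less_complement: "x \<in> F \<Longrightarrow> t < sum v F - v x"
  using light_complement_forces_false restriction_nonconst by (meson not_le)

lemma threshold_nonneg: "x \<in> F \<Longrightarrow> 0 \<le> t"
  using weight_le_threshold nonneg order_trans by blast

text \<open>Evaluate the restriction, canalized at \<open>k\<close>, at the two extreme inputs agreeing with
  \<open>s\<close> nowhere else and everywhere else.\<close>

lemma pair_above_threshold:
  assumes "j \<in> F" shows "\<exists>k\<in>F - {j}. t < v j + v k"
proof -
  obtain k c where k: "k \<in> F - {j}"
    and const: "\<forall>y z. h ((y(k := c))(j := s j)) = h ((z(k := c))(j := s j))"
    using restriction_canalizing[OF assms, of "s j"] unfolding canalizing_in_def by blast
  have same: "h (((point {})(k := c))(j := s j)) = h (((point UNIV)(k := c))(j := s j))"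
    using const by blast
  consider "c = s k" | "c = (\<not> s k)" by blast
  then show ?thesis
  proof cases
    case 1
    have "F \<inter> {j, k} = {j, k}" using assms k by auto
    moreover have "t < sum v F" using threshold_less_complement[OF assms] nonneg[of j] by linarith
    ultimately have "t < sum v {j, k}" using same unfolding 1 point_upd_agree h_point by simp
    then show ?thesis using k by auto
  next
    case 2
    have "F \<inter> insert j ({} - {k}) = {j}" "F \<inter> insert j (UNIV - {k}) = F - {k}"
      using assms k by auto
    then have False
      using same weight_le_threshold[OF assms] threshold_less_complement[of k] k
      unfolding 2 point_upd_agree point_upd_disagree h_point by (simp add: sum_remove)
    then show ?thesis ..
  qed
qed

lemma pair_complement_below:
  assumes "j \<in> F" shows "\<exists>k\<in>F - {j}. sum v F - v j - v k \<le> t"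
proof -
  obtain k c where k: "k \<in> F - {j}"
    and const: "\<forall>y z. h ((y(k := c))(j := \<not> s j)) = h ((z(k := c))(j := \<not> s j))"
    using restriction_canalizing[OF assms, of "\<not> s j"] unfolding canalizing_in_def by blast
  have same: "h (((point {})(k := c))(j := \<not> s j)) = h (((point UNIV)(k := c))(j := \<not> s j))"
    using const by blast
  consider "c = s k" | "c = (\<not> s k)" by blast
  then show ?thesis
  proof cases
    case 1
    have "F \<inter> (insert k {} - {j}) = {k}" "F \<inter> (insert k UNIV - {j}) = F - {j}"
      using assms k by auto
    then have False
      using same weight_le_threshold[of k] threshold_less_complement[OF assms] k assms
      unfolding 1 point_upd_agree point_upd_disagree h_point by (simp add: sum_remove)
    then show ?thesis ..
  next
    case 2
    have "F \<inter> ({} - {k} - {j}) = {}" "F \<inter> (UNIV - {k} - {j}) = (F - {k}) - {j}"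
      using assms k by auto
    moreover have "sum v (F - {k} - {j}) = sum v F - v k - v j"
      using assms k by (simp add: sum_remove)
    ultimately have "sum v F - v k - v j \<le> t"
      using same threshold_nonneg[OF assms] unfolding 2 point_upd_disagree h_point by simp
    then show ?thesis using k by (auto simp: algebra_simps)
  qed
qed

text \<open>With \<open>x\<^sub>0\<close> a variable of maximal weight, the two pair lemmas say that \<open>x\<^sub>0\<close> together
  with any other variable reaches the threshold, while all variables but \<open>x\<^sub>0\<close> and one
  other do not: this is the shape of \<open>g\<^sub>m\<close>.\<close>

lemma g_shape:
  assumes "F \<noteq> {}"
  obtains x0 where "x0 \<in> F"
    and "\<And>y. h y \<longleftrightarrow> (y x0 = s x0 \<and> (\<exists>j\<in>F - {x0}. y j = s j)) \<or> (\<forall>j\<in>F - {x0}. y j = s j)"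
proof -
  have "Max (v ` F) \<in> v ` F" using finite_F assms by simp
  then obtain x0 where x0: "x0 \<in> F" "v x0 = Max (v ` F)" by auto
  have max: "v k \<le> v x0" if "k \<in> F" for k
    using x0(2) finite_F that by simp
  have above: "t < v x0 + v j" if "j \<in> F - {x0}" for j
    using pair_above_threshold[of j] max that by fastforce
  have below: "sum v F - v x0 - v j \<le> t" if "j \<in> F - {x0}" for j
    using pair_complement_below[of j] max that by fastforce
  have "h y \<longleftrightarrow> (y x0 = s x0 \<and> (\<exists>j\<in>F - {x0}. y j = s j)) \<or> (\<forall>j\<in>F - {x0}. y j = s j)" for y
  proof -
    let ?T = "{i\<in>F. y i = s i}"
    have "h y" if "y x0 = s x0" "j \<in> F - {x0}" "y j = s j" for j
    proof -
      have "sum v {x0, j} \<le> sum v ?T" using that x0(1) by (intro sum_mono_subset) auto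
      then show ?thesis using above[OF that(2)] that(2) by (simp add: h_iff)
    qed
    moreover have "h y" if "\<forall>j\<in>F - {x0}. y j = s j"
    proof -
      have "sum v (F - {x0}) \<le> sum v ?T" using that by (intro sum_mono_subset) auto
      then show ?thesis using threshold_less_complement[OF x0(1)] x0(1)
        by (simp add: h_iff sum_remove)
    qed
    moreover have "\<not> h y" if "\<forall>j\<in>F - {x0}. y j \<noteq> s j"
    proof -
      have "sum v ?T \<le> sum v {x0}" using that x0(1) by (intro sum_mono_subset) auto
      then show ?thesis using weight_le_threshold[OF x0(1)] by (simp add: h_iff)
    qed
    moreover have "\<not> h y" if "y x0 \<noteq> s x0" "j \<in> F - {x0}" "y j \<noteq> s j" for j
    proof -
      have "sum v ?T \<le> sum v (F - {x0} - {j})" using that by (intro sum_mono_subset) auto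
      then show ?thesis using below[OF that(2)] that(2) x0(1) by (simp add: h_iff sum_remove)
    qed
    ultimately show ?thesis by blast
  qed
  then show ?thesis using that x0(1) by blast
qed

end

lemma has_G_restriction_on_if_g_shape:
  assumes "finite F" and "x0 \<in> F" and "3 \<le> card F"
    and shape: "\<And>y. h y \<longleftrightarrow> (y x0 = s x0 \<and> (\<exists>j\<in>F - {x0}. y j = s j)) \<or> (\<forall>j\<in>F - {x0}. y j = s j)"
  shows "has_G_restriction_on F h"
proof -
  define m where "m = card F"
  have "card (F - {x0}) = card {1..<m}" using assms(1,2) by (simp add: m_def)
  then obtain \<tau> where \<tau>: "bij_betw \<tau> (F - {x0}) {1..<m}"
    using finite_same_card_bij assms(1) by blast
  define \<sigma> where "\<sigma> = \<tau>(x0 := 0)"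
  have \<sigma>_rest: "bij_betw \<sigma> (F - {x0}) {1..<m}"
    using \<tau> unfolding \<sigma>_def by (rule bij_betw_cong[THEN iffD1, rotated]) auto
  have "bij_betw \<sigma> ((F - {x0}) \<union> {x0}) ({1..<m} \<union> {\<sigma> x0})"
    using \<sigma>_rest by (intro notIn_Un_bij_betw) (auto simp: \<sigma>_def)
  moreover have "(F - {x0}) \<union> {x0} = F" "{1..<m} \<union> {\<sigma> x0} = {..<m}"
    using assms(2,3) by (auto simp: \<sigma>_def m_def)
  ultimately have \<sigma>: "bij_betw \<sigma> F {..<m}" by simp
  have \<sigma>_image: "\<sigma> ` (F - {x0}) = {1..<m}"
    using \<sigma>_rest by (simp add: bij_betw_def)
  define N where "N = \<sigma> ` {i\<in>F. \<not> s i}"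
  have N: "\<sigma> i \<in> N \<longleftrightarrow> \<not> s i" if "i \<in> F" for i
    using that \<sigma> unfolding N_def bij_betw_def inj_on_def by auto
  have restr: "h (\<lambda>i. if i \<in> {} then c i else y (\<sigma> i)) = gneg m N y" for c y
  proof -
    define y' where "y' i = (if i \<in> N then \<not> y i else y i)" for i
    have "h (\<lambda>i. y (\<sigma> i)) \<longleftrightarrow> (y' (\<sigma> x0) \<and> (\<exists>j\<in>F - {x0}. y' (\<sigma> j))) \<or> (\<forall>j\<in>F - {x0}. y' (\<sigma> j))"
      unfolding shape y'_def using N assms(2) by auto
    also have "\<dots> \<longleftrightarrow> gfun m y'"
      unfolding gfun_def \<sigma>_image[symmetric] by (auto simp: \<sigma>_def)
    finally show ?thesis unfolding gneg_def y'_def by simp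
  qed
  show ?thesis unfolding has_G_restriction_on_def
  proof (intro exI conjI)
    show "N \<subseteq> {..<m}" using \<sigma> unfolding N_def bij_betw_def by auto
    show "bij_betw \<sigma> (F - {}) {..<m}" using \<sigma> by simp
  qed (use assms(3) restr in \<open>auto simp: m_def\<close>)
qed

lemma has_G_restriction_on_if_restrictions_lro_on:
  assumes "finite F" and "threshold_on F h" and "\<not> lro_on F h"
    and restr_lro: "\<And>x b. x \<in> F \<Longrightarrow> lro_on (F - {x}) (\<lambda>y. h (y(x := b)))"
  shows "has_G_restriction_on F h"
proof -
  have nonconst: "\<exists>y z. h (y(x := b)) \<noteq> h (z(x := b))" if "x \<in> F" for x b
    using lro_on_if_canalizing_var[OF that _ restr_lro[OF that]] assms(3) by blast
  obtain v :: "nat \<Rightarrow> real" and s t where "\<And>i. 0 \<le> v i" and "\<And>y. h y \<longleftrightarrow> t < sum v {i\<in>F. y i = s i}"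
    by (rule threshold_on_nonneg_weights[OF assms(1,2)]) blast
  then interpret critical_threshold F v s t h
    using assms(1) nonconst restr_lro canalizing_in_if_lro_on by unfold_locales auto
  have "F \<noteq> {}"
    using assms(2,3) threshold_on_empty_const unfolding lro_on_def by blast
  then obtain x0 where x0: "x0 \<in> F"
    and shape: "\<And>y. h y \<longleftrightarrow> (y x0 = s x0 \<and> (\<exists>j\<in>F - {x0}. y j = s j)) \<or> (\<forall>j\<in>F - {x0}. y j = s j)"
    by (rule g_shape) blast
  have "3 \<le> card F"
  proof (rule ccontr)
    obtain k where k: "k \<in> F - {x0}"
      using restriction_canalizing[OF x0, of True] unfolding canalizing_in_def by blast
    assume "\<not> 3 \<le> card F"
    then have "card (F - {x0}) \<le> 1" using x0 by simp
    then have "j = k" if "j \<in> F - {x0}" for j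
      using k that assms(1) by (auto simp: card_le_Suc0_iff_eq)
    then have "h (y(k := s k))" for y unfolding shape by auto
    then show False using restriction_nonconst[of k "s k"] k by blast
  qed
  then show ?thesis using has_G_restriction_on_if_g_shape assms(1) x0 shape by blast
qed

lemma has_G_restriction_on_if_not_lro_on:
  "finite F \<Longrightarrow> threshold_on F h \<Longrightarrow> \<not> lro_on F h \<Longrightarrow> has_G_restriction_on F h"
proof (induction "card F" arbitrary: F h rule: less_induct)
  case less
  show ?case
  proof (cases "\<exists>x\<in>F. \<exists>b. \<not> lro_on (F - {x}) (\<lambda>y. h (y(x := b)))")
    case True
    then obtain x b where x: "x \<in> F" and not_lro: "\<not> lro_on (F - {x}) (\<lambda>y. h (y(x := b)))"
      by blast
    have "has_G_restriction_on (F - {x}) (\<lambda>y. h (y(x := b)))"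
    proof (rule less.hyps)
      show "card (F - {x}) < card F" using less.prems(1) x by (rule card_Diff1_less)
      show "threshold_on (F - {x}) (\<lambda>y. h (y(x := b)))"
        using less.prems(1) x less.prems(2) by (rule threshold_on_restrict)
    qed (use less.prems(1) not_lro in auto)
    then show ?thesis by (rule has_G_restriction_on_if_restrict[OF x])
  next
    case False
    then show ?thesis using has_G_restriction_on_if_restrictions_lro_on less.prems by blast
  qed
qed

theorem mainTheorem17:
  fixes n :: nat and f :: "(nat \<Rightarrow> bool) \<Rightarrow> bool"
  assumes "boolfun n f" and "threshold n f"
  shows "lro n f \<longleftrightarrow> \<not> has_G_restriction n f"
proof -
  have "threshold_on {..<n} f" "lro n f = lro_on {..<n} f"
    "has_G_restriction n f = has_G_restriction_on {..<n} f"
    using assms(2) unfolding threshold_def threshold_on_def lro_def lro_on_def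
      has_G_restriction_def has_G_restriction_on_def by auto
  then show ?thesis
    using not_has_G_restriction_on_if_lro_on has_G_restriction_on_if_not_lro_on[OF finite_lessThan]
    by blast
qed

end
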